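(* Suppose the joint distribution of $(\boldsymbol X,Y)\in\mathbb R^p\times\mathbb R$ satisfies: (i) there are constants $\ell>2$ and $c_1>0$ with $\mathbb E[|\langle\boldsymbol\beta,\boldsymbol X\rangle|^\ell]\le c_1$ for all unit vectors $\boldsymbol\beta\in\mathbb R^p$; (ii) $Y$ is a continuous random variable; (iii) the central curve $\boldsymbol m(y)=\mathbb E[\boldsymbol X\mid Y=y]$ is continuous. Let $d=\dim\mathrm{span}\{\boldsymbol m(y):y\in\mathbb R\}$. Then for every $\tau>1$ there exists an integer $K=K(\tau,d)\ge d$ such that $\boldsymbol m$ is weak $(K,\tau)$-sliced stable w.r.t. $Y$.
   Context: Fix a small constant $\gamma\in(0,1)$. A continuous curve $\boldsymbol\kappa:\mathbb R\to\mathbb R^p$ is weak $(K,\tau)$-sliced stable w.r.t. $Y$ (with $K$ a positive integer, $\tau>1$) if for every $H\ge K$ and every partition $-\infty=a_0<a_1<\dots<a_H=\infty$ with $\frac{1-\gamma}{H}\le\mathbb P(a_h\le Y\le a_{h+1})\le\frac{1+\gamma}{H}$ for $h=0,\dots,H-1$, one has $\frac1H\sum_{h=0}^{H-1}\mathrm{var}(\boldsymbol\beta^\top\boldsymbol\kappa(Y)\mid a_h\le Y\le a_{h+1})\le\frac1\tau\mathrm{var}(\boldsymbol\beta^\top\boldsymbol\kappa(Y))$ for all unit $\boldsymbol\beta\in\mathbb R^p$. *)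

theory Defs
  imports "HOL-Probability.Probability"
begin

text \<open>The h-th slice (h = 0..H-1) of the partition
  -infinity = a 0 < a 1 < ... < a (H-1) < a H = +infinity:
  the closed interval [a h, a (h+1)], with infinite end points at h = 0 and h = H-1.
  The values a 0 and a H are ignored (they stand for -infinity and +infinity).\<close>
definition slice :: "(nat \<Rightarrow> real) \<Rightarrow> nat \<Rightarrow> nat \<Rightarrow> real set" where
  "slice a H h = {y. (h = 0 \<or> a h \<le> y) \<and> (h + 1 = H \<or> y \<le> a (h + 1))}"

definition var_rv :: "'a measure \<Rightarrow> ('a \<Rightarrow> real) \<Rightarrow> real" where
  "var_rv M Z = (LINT w|M. (Z w - (LINT v|M. Z v))\<^sup>2)"

definition cond_var :: "'a measure \<Rightarrow> 'a set \<Rightarrow> ('a \<Rightarrow> real) \<Rightarrow> real" where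
  "cond_var M A Z = var_rv (uniform_measure M A) Z"

definition weak_sliced_stable ::
  "real \<Rightarrow> 'a measure \<Rightarrow> ('a \<Rightarrow> real) \<Rightarrow> (real \<Rightarrow> real ^ 'p) \<Rightarrow> nat \<Rightarrow> real \<Rightarrow> bool" where
  "weak_sliced_stable \<gamma> M Y \<kappa> K \<tau> \<longleftrightarrow>
     continuous_on UNIV \<kappa> \<and> K > 0 \<and> \<tau> > 1 \<and>
     (\<forall>H a. H \<ge> K \<longrightarrow>
        (\<forall>i j. 1 \<le> i \<longrightarrow> i < j \<longrightarrow> j \<le> H - 1 \<longrightarrow> a i < a j) \<longrightarrow>
        (\<forall>h<H. (1 - \<gamma>) / real H \<le> measure M (Y -` slice a H h \<inter> space M) \<and>
                measure M (Y -` slice a H h \<inter> space M) \<le> (1 + \<gamma>) / real H) \<longrightarrow>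
        (\<forall>\<beta>::real ^ 'p. norm \<beta> = 1 \<longrightarrow>
           (1 / real H) * (\<Sum>h<H. cond_var M (Y -` slice a H h \<inter> space M) (\<lambda>w. \<beta> \<bullet> \<kappa> (Y w)))
             \<le> (1 / \<tau>) * var_rv M (\<lambda>w. \<beta> \<bullet> \<kappa> (Y w))))"

end

theory Submission
  imports Defs
begin

text \<open>
  Write \<open>Z = m(Y)\<close>. The moment bound and Jensen's inequality for conditional expectations
  make \<open>Z\<close> square integrable. For a unit vector \<open>\<beta>\<close> split \<open>\<beta> = n + u\<close>, where \<open>n\<close> lies in the
  subspace \<open>N\<close> of directions in which \<open>Z\<close> is a.s. constant and \<open>u \<bottom> N\<close>; then
  \<open>var(\<beta>\<cdot>Z) = var(u\<cdot>Z) \<ge> \<lambda>|u|\<^sup>2\<close> for some \<open>\<lambda> > 0\<close>, by compactness of the unit sphere of \<open>N\<^sup>\<bottom>\<close>.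
  On the other hand, continuity of \<open>m\<close> and \<open>Z \<in> L\<^sup>2\<close> make \<open>Z\<close> \<open>L\<^sup>2\<close>-close to \<open>s(Y)\<close> for a bounded
  step function \<open>s\<close> with finitely many jumps. At most two slices contain a given jump, and \<open>s(Y)\<close>
  is constant on all other slices, so \<open>\<Sum>\<^sub>h E[|Z - c\<^sub>h|\<^sup>2; slice h] \<rightarrow> 0\<close> as \<open>H \<rightarrow> \<infinity>\<close> for suitable
  constants \<open>c\<^sub>h\<close>. Since every slice has probability at least \<open>(1-\<gamma>)/H\<close>, the average conditional
  variance of \<open>\<beta>\<cdot>Z\<close> is at most \<open>|u|\<^sup>2/(1-\<gamma>)\<close> times that sum, hence below \<open>\<lambda>|u|\<^sup>2/\<tau>\<close> for large \<open>H\<close>.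
\<close>

lemma norm_diff_sq_le: "(norm (x - y :: 'a::real_normed_vector))\<^sup>2 \<le> 2 * (norm x)\<^sup>2 + 2 * (norm y)\<^sup>2"
proof -
  have "(norm (x - y))\<^sup>2 \<le> (norm x + norm y)\<^sup>2"
    by (intro power_mono norm_triangle_ineq4) simp
  also have "\<dots> \<le> 2 * (norm x)\<^sup>2 + 2 * (norm y)\<^sup>2"
    using sum_squares_bound[of "norm x" "norm y"] by (simp add: power2_sum)
  finally show ?thesis .
qed

lemma le_one_plus_sq: "x \<le> 1 + (x::real)\<^sup>2"
proof -
  have "0 \<le> (x - 1/2)\<^sup>2" by simp
  then show ?thesis by (simp add: power2_eq_square algebra_simps)
qed

lemma abs_mult_le_sum_sq: "\<bar>a * b\<bar> \<le> a\<^sup>2 + (b::real)\<^sup>2"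
proof -
  have "0 \<le> (\<bar>a\<bar> - \<bar>b\<bar>)\<^sup>2" "0 \<le> \<bar>a\<bar> * \<bar>b\<bar>" by simp_all
  then show ?thesis unfolding power2_diff power2_abs abs_mult by linarith
qed

lemma inner_sq_le: "(u \<bullet> x)\<^sup>2 \<le> (norm u)\<^sup>2 * (norm x)\<^sup>2"
  by (metis Cauchy_Schwarz_ineq2 abs_ge_zero power2_abs power_mono power_mult_distrib)

lemma (in prob_space) variance_le_mean_sq_dev:
  fixes f :: "'a \<Rightarrow> real"
  assumes "integrable M f" "integrable M (\<lambda>x. (f x)\<^sup>2)"
  shows "variance f \<le> expectation (\<lambda>x. (f x - d)\<^sup>2)"
proof -
  have "expectation (\<lambda>x. (f x - d)\<^sup>2) = expectation (\<lambda>x. (f x)\<^sup>2) - 2 * d * expectation f + d\<^sup>2"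
    using assms by (simp add: power2_diff prob_space)
  moreover have "0 \<le> (expectation f - d)\<^sup>2" by simp
  ultimately show ?thesis
    using variance_eq[OF assms] by (simp add: power2_diff algebra_simps)
qed

lemma uniform_measure_eq_density:
  assumes "finite_measure M" "S \<in> sets M" "measure M S > 0"
  shows "uniform_measure M S = density M (\<lambda>x. ennreal (indicator S x / measure M S))"
proof -
  interpret finite_measure M by fact
  have "indicator S x / emeasure M S = ennreal (indicator S x / measure M S)" for x
    using assms by (auto simp: emeasure_eq_measure split: split_indicator
        intro: divide_ennreal[of 1, simplified ennreal_1])
  then show ?thesis unfolding uniform_measure_def by simp
qed

lemma cond_var_le_mean_sq_dev:
  fixes f :: "'a \<Rightarrow> real"
  assumes "finite_measure M" and S: "S \<in> sets M" "measure M S > 0"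
    and f: "integrable M f" "integrable M (\<lambda>x. (f x)\<^sup>2)"
  shows "cond_var M S f \<le> (LINT x|M. indicator S x * (f x - d)\<^sup>2) / measure M S"
proof -
  interpret finite_measure M by fact
  let ?g = "\<lambda>x. indicator S x / measure M S"
  have g_measurable: "?g \<in> borel_measurable M" using S by measurable
  have uniform_eq: "uniform_measure M S = density M ?g"
    using uniform_measure_eq_density[OF assms(1) S] .
  interpret U: prob_space "uniform_measure M S"
    by (rule prob_space_uniform_measure) (use S in \<open>auto simp: emeasure_eq_measure\<close>)
  have integrable_U: "integrable (uniform_measure M S) h" if "integrable M h" for h :: "'a \<Rightarrow> real"
  proof -
    have "integrable M (\<lambda>x. ?g x *\<^sub>R h x)"
      using integrable_mult_right[OF integrable_real_mult_indicator[OF S(1) that], of "1 / measure M S"]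
      by (simp add: mult.commute)
    then show ?thesis
      unfolding uniform_eq using integrable_density[OF borel_measurable_integrable[OF that] g_measurable]
      by simp
  qed
  have "cond_var M S f \<le> (LINT x|uniform_measure M S. (f x - d)\<^sup>2)"
    unfolding cond_var_def var_rv_def
    by (rule U.variance_le_mean_sq_dev) (use f integrable_U in auto)
  also have "\<dots> = (LINT x|M. ?g x *\<^sub>R (f x - d)\<^sup>2)"
    unfolding uniform_eq by (rule integral_density) (use f g_measurable in auto)
  also have "\<dots> = (LINT x|M. indicator S x * (f x - d)\<^sup>2) / measure M S"
    by (simp add: mult.commute)
  finally show ?thesis .
qed

section \<open>Directional variances of a square-integrable random vector\<close>

locale square_integrable_rv = prob_space M for M :: "'a measure" +
  fixes Z :: "'a \<Rightarrow> 'b::euclidean_space"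
  assumes Z_measurable[measurable]: "Z \<in> borel_measurable M"
    and integrable_norm_sq: "integrable M (\<lambda>w. (norm (Z w))\<^sup>2)"
begin

lemma integrable_norm_diff_sq: "integrable M (\<lambda>w. (norm (Z w - c))\<^sup>2)"
  by (rule Bochner_Integration.integrable_bound[where f="\<lambda>w. 2 * (norm (Z w))\<^sup>2 + 2 * (norm c)\<^sup>2"])
     (use integrable_norm_sq norm_diff_sq_le in auto)

lemma integrable_Z: "integrable M Z"
proof (rule Bochner_Integration.integrable_bound[where f="\<lambda>w. 1 + (norm (Z w))\<^sup>2"])
  show "AE w in M. norm (Z w) \<le> norm (1 + (norm (Z w))\<^sup>2)"
    using le_one_plus_sq by (intro AE_I2) simp
qed (use integrable_norm_sq in auto)

lemma integrable_inner_diff_sq: "integrable M (\<lambda>w. (v \<bullet> (Z w - c))\<^sup>2)"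
  by (rule Bochner_Integration.integrable_bound[where f="\<lambda>w. (norm v)\<^sup>2 * (norm (Z w - c))\<^sup>2"])
     (use integrable_norm_diff_sq inner_sq_le in auto)

lemma integrable_inner_diff_mult:
  "integrable M (\<lambda>w. (u \<bullet> (Z w - c)) * (v \<bullet> (Z w - c)))"
proof (rule Bochner_Integration.integrable_bound
    [where f="\<lambda>w. (u \<bullet> (Z w - c))\<^sup>2 + (v \<bullet> (Z w - c))\<^sup>2"])
  show "AE w in M. norm ((u \<bullet> (Z w - c)) * (v \<bullet> (Z w - c)))
      \<le> norm ((u \<bullet> (Z w - c))\<^sup>2 + (v \<bullet> (Z w - c))\<^sup>2)"
    using abs_mult_le_sum_sq by (intro AE_I2) simp
qed (use integrable_inner_diff_sq in auto)

lemma var_rv_inner: "var_rv M (\<lambda>w. v \<bullet> Z w) = expectation (\<lambda>w. (v \<bullet> (Z w - expectation Z))\<^sup>2)"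
  unfolding var_rv_def using integrable_Z by (simp add: inner_diff_right)

lemma var_rv_inner_nonneg: "0 \<le> var_rv M (\<lambda>w. v \<bullet> Z w)"
  unfolding var_rv_def by simp

lemma var_rv_inner_scaleR: "var_rv M (\<lambda>w. (c *\<^sub>R v) \<bullet> Z w) = c\<^sup>2 * var_rv M (\<lambda>w. v \<bullet> Z w)"
  unfolding var_rv_inner by (simp add: power_mult_distrib)

lemma continuous_on_var_rv_inner: "continuous_on UNIV (\<lambda>v. var_rv M (\<lambda>w. v \<bullet> Z w))"
proof -
  let ?W = "\<lambda>w. Z w - expectation Z"
  define C where "C b b' = expectation (\<lambda>w. (b \<bullet> ?W w) * (b' \<bullet> ?W w))" for b b' :: 'b
  have "var_rv M (\<lambda>w. v \<bullet> Z w) = (\<Sum>b\<in>Basis. \<Sum>b'\<in>Basis. (v \<bullet> b) * (v \<bullet> b') * C b b')" for v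
  proof -
    have "(v \<bullet> ?W w)\<^sup>2 = (\<Sum>b\<in>Basis. \<Sum>b'\<in>Basis. (v \<bullet> b) * (v \<bullet> b') * ((b \<bullet> ?W w) * (b' \<bullet> ?W w)))" for w
      unfolding power2_eq_square euclidean_inner[of v "?W w"] sum_product
      by (simp add: inner_commute algebra_simps)
    then show ?thesis
      unfolding var_rv_inner C_def
      by (simp add: integrable_inner_diff_mult Bochner_Integration.integral_sum
          Bochner_Integration.integrable_sum)
  qed
  then show ?thesis by (simp add: continuous_intros)
qed

definition null_directions :: "'b set" where
  "null_directions = {v. AE w in M. v \<bullet> (Z w - expectation Z) = 0}"

lemma subspace_null_directions: "subspace null_directions"
  unfolding subspace_def null_directions_def
  by (auto simp: inner_add_left elim: AE_mp intro: AE_I2)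

lemma var_rv_inner_eq_0_imp_null: "var_rv M (\<lambda>w. v \<bullet> Z w) = 0 \<Longrightarrow> v \<in> null_directions"
  unfolding var_rv_inner null_directions_def
  using integral_nonneg_eq_0_iff_AE[OF integrable_inner_diff_sq] by simp

lemma var_rv_inner_coercive:
  "\<exists>l>0. \<forall>u. (\<forall>x\<in>null_directions. u \<bullet> x = 0) \<longrightarrow> l * (norm u)\<^sup>2 \<le> var_rv M (\<lambda>w. u \<bullet> Z w)"
proof -
  let ?V = "\<lambda>v. var_rv M (\<lambda>w. v \<bullet> Z w)"
  define T where "T = sphere 0 1 \<inter> (\<Inter>x\<in>null_directions. {u. x \<bullet> u = 0})"
  have normalized_in_T: "(1 / norm u) *\<^sub>R u \<in> T"
    if "\<forall>x\<in>null_directions. u \<bullet> x = 0" "u \<noteq> 0" for u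
    using that unfolding T_def by (auto simp: inner_commute)
  show ?thesis
  proof (cases "T = {}")
    case True
    have "1 * (norm u)\<^sup>2 \<le> ?V u" if "\<forall>x\<in>null_directions. u \<bullet> x = 0" for u
      using normalized_in_T[OF that] True var_rv_inner_nonneg[of u] by (cases "u = 0") auto
    then show ?thesis by (intro exI[of _ 1]) auto
  next
    case False
    have "compact T"
      unfolding T_def by (intro compact_Int_closed compact_sphere closed_INT ballI closed_hyperplane)
    then obtain u0 where u0: "u0 \<in> T" "\<And>u. u \<in> T \<Longrightarrow> ?V u0 \<le> ?V u"
      using continuous_attains_inf[OF _ False continuous_on_subset[OF continuous_on_var_rv_inner]]
      by blast
    have "?V u0 \<noteq> 0"
    proof
      assume "?V u0 = 0"
      then have "u0 \<bullet> u0 = 0"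
        using var_rv_inner_eq_0_imp_null u0(1) unfolding T_def by auto
      then show False using u0(1) unfolding T_def by simp
    qed
    then have pos: "?V u0 > 0" using var_rv_inner_nonneg[of u0] by linarith
    have "?V u0 * (norm u)\<^sup>2 \<le> ?V u" if "\<forall>x\<in>null_directions. u \<bullet> x = 0" for u
    proof (cases "u = 0")
      case False
      have "?V u0 * (norm u)\<^sup>2 \<le> ?V ((1 / norm u) *\<^sub>R u) * (norm u)\<^sup>2"
        using u0(2)[OF normalized_in_T[OF that False]] by (rule mult_right_mono) simp
      also have "\<dots> = ?V u"
        unfolding var_rv_inner_scaleR using False by (simp add: power_divide)
      finally show ?thesis .
    qed (use var_rv_inner_nonneg[of 0] in simp)
    then show ?thesis using pos by blast
  qed
qed

lemma null_directions_decomp: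
  obtains u where "\<beta> - u \<in> null_directions" "\<forall>x\<in>null_directions. u \<bullet> x = 0"
proof -
  obtain n u where "n \<in> span null_directions" "\<And>x. x \<in> span null_directions \<Longrightarrow> orthogonal u x"
    and "\<beta> = n + u"
    using orthogonal_subspace_decomp_exists by blast
  moreover have "span null_directions = null_directions"
    using subspace_null_directions by (rule span_eq_iff[THEN iffD2])
  ultimately show ?thesis using that[of u] by (auto simp: orthogonal_def)
qed

lemma var_rv_inner_null_shift:
  assumes "\<beta> - u \<in> null_directions"
  shows "var_rv M (\<lambda>w. \<beta> \<bullet> Z w) = var_rv M (\<lambda>w. u \<bullet> Z w)"
  unfolding var_rv_inner
proof (rule integral_cong_AE)
  show "AE w in M. (\<beta> \<bullet> (Z w - expectation Z))\<^sup>2 = (u \<bullet> (Z w - expectation Z))\<^sup>2"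
    using assms unfolding null_directions_def mem_Collect_eq by eventually_elim (simp add: inner_diff_left)
qed simp_all

lemma cond_var_inner_le:
  assumes S: "S \<in> sets M" "measure M S > 0" and null: "\<beta> - u \<in> null_directions"
  shows "cond_var M S (\<lambda>w. \<beta> \<bullet> Z w)
    \<le> (norm u)\<^sup>2 * (LINT w|M. indicator S w * (norm (Z w - c))\<^sup>2) / measure M S"
proof -
  define d where "d = u \<bullet> c + (\<beta> - u) \<bullet> expectation Z"
  have "cond_var M S (\<lambda>w. \<beta> \<bullet> Z w) \<le> (LINT w|M. indicator S w * (\<beta> \<bullet> Z w - d)\<^sup>2) / measure M S"
    using integrable_inner_diff_sq[of \<beta> 0] integrable_Z
    by (intro cond_var_le_mean_sq_dev S) (auto intro: finite_measure_axioms)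
  also have "(LINT w|M. indicator S w * (\<beta> \<bullet> Z w - d)\<^sup>2) = (LINT w|M. indicator S w * (u \<bullet> (Z w - c))\<^sup>2)"
  proof (rule integral_cong_AE)
    show "AE w in M. indicator S w * (\<beta> \<bullet> Z w - d)\<^sup>2 = indicator S w * (u \<bullet> (Z w - c))\<^sup>2"
      using null unfolding null_directions_def mem_Collect_eq
    proof eventually_elim
      case (elim w)
      then have "\<beta> \<bullet> Z w - d = u \<bullet> (Z w - c)"
        unfolding d_def inner_diff_left inner_diff_right by linarith
      then show ?case by simp
    qed
  qed (use S in simp_all)
  also have "\<dots> \<le> (LINT w|M. (norm u)\<^sup>2 * (indicator S w * (norm (Z w - c))\<^sup>2))"
  proof (rule integral_mono)
    show "integrable M (\<lambda>w. indicator S w * (u \<bullet> (Z w - c))\<^sup>2)"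
      using integrable_real_mult_indicator[OF S(1) integrable_inner_diff_sq] by (simp add: mult.commute)
    show "integrable M (\<lambda>w. (norm u)\<^sup>2 * (indicator S w * (norm (Z w - c))\<^sup>2))"
      using integrable_real_mult_indicator[OF S(1) integrable_norm_diff_sq]
      by (intro integrable_mult_right) (simp add: mult.commute)
  qed (use inner_sq_le in \<open>auto simp: indicator_def\<close>)
  finally show ?thesis
    using S(2) by (simp add: divide_right_mono)
qed

lemma sum_cond_var_inner_le:
  assumes S: "\<And>h. h < H \<Longrightarrow> S h \<in> sets M" "\<And>h. h < H \<Longrightarrow> p \<le> measure M (S h)" "0 < p"
    and null: "\<beta> - u \<in> null_directions"
  shows "(\<Sum>h<H. cond_var M (S h) (\<lambda>w. \<beta> \<bullet> Z w))
    \<le> (norm u)\<^sup>2 / p * (\<Sum>h<H. LINT w|M. indicator (S h) w * (norm (Z w - c h))\<^sup>2)"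
proof -
  have "cond_var M (S h) (\<lambda>w. \<beta> \<bullet> Z w) \<le> (norm u)\<^sup>2 / p * (LINT w|M. indicator (S h) w * (norm (Z w - c h))\<^sup>2)"
    if h: "h < H" for h
  proof -
    have "cond_var M (S h) (\<lambda>w. \<beta> \<bullet> Z w)
        \<le> (norm u)\<^sup>2 * (LINT w|M. indicator (S h) w * (norm (Z w - c h))\<^sup>2) / measure M (S h)"
      using S(1,2)[OF h] S(3) null by (intro cond_var_inner_le) auto
    also have "\<dots> \<le> (norm u)\<^sup>2 * (LINT w|M. indicator (S h) w * (norm (Z w - c h))\<^sup>2) / p"
      using S(2)[OF h] S(3) by (intro divide_left_mono mult_nonneg_nonneg integral_nonneg_AE) auto
    finally show ?thesis by simp
  qed
  then show ?thesis unfolding sum_distrib_left by (intro sum_mono) auto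
qed

end

section \<open>Slices and step functions\<close>

definition increasing_cuts :: "(nat \<Rightarrow> real) \<Rightarrow> nat \<Rightarrow> bool" where
  "increasing_cuts a H \<longleftrightarrow> (\<forall>i j. 1 \<le> i \<longrightarrow> i < j \<longrightarrow> j \<le> H - 1 \<longrightarrow> a i < a j)"

lemma slice_borel[measurable]: "slice a H h \<in> sets borel"
proof -
  have "slice a H h = (if h = 0 then UNIV else {a h..}) \<inter> (if h + 1 = H then UNIV else {..a (h + 1)})"
    unfolding slice_def by auto
  then show ?thesis by simp
qed

lemma slice_interval: "y \<in> slice a H h \<Longrightarrow> y' \<in> slice a H h \<Longrightarrow> y \<le> g \<Longrightarrow> g \<le> y' \<Longrightarrow> g \<in> slice a H h"
  unfolding slice_def by auto

lemma card_slices_containing_le_2: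
  assumes "increasing_cuts a H"
  shows "card {h. h < H \<and> y \<in> slice a H h} \<le> 2"
proof (cases "{h. h < H \<and> y \<in> slice a H h} = {}")
  case False
  let ?A = "{h. h < H \<and> y \<in> slice a H h}"
  define h0 where "h0 = Min ?A"
  have h0: "h0 \<in> ?A" "\<And>h. h \<in> ?A \<Longrightarrow> h0 \<le> h"
    using Min_in[OF _ False] Min_le unfolding h0_def by auto
  have "?A \<subseteq> {h0, h0 + 1}"
  proof
    fix h assume h: "h \<in> ?A"
    show "h \<in> {h0, h0 + 1}"
    proof (rule ccontr)
      assume "h \<notin> {h0, h0 + 1}"
      then have lt: "h0 + 1 < h" using h0(2)[OF h] by auto
      have "y \<le> a (h0 + 1)" using h0(1) h lt unfolding slice_def by auto
      moreover have "a h \<le> y" using h lt unfolding slice_def by auto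
      moreover have "a (h0 + 1) < a h" using assms h lt unfolding increasing_cuts_def by auto
      ultimately show False by simp
    qed
  qed
  then have "card ?A \<le> card {h0, h0 + 1}" by (intro card_mono) auto
  then show ?thesis by simp
qed (simp only: card.empty)

definition changes_only_at :: "real set \<Rightarrow> (real \<Rightarrow> 'b) \<Rightarrow> bool" where
  "changes_only_at G s \<longleftrightarrow> (\<forall>y y'. y \<le> y' \<longrightarrow> {y..y'} \<inter> G = {} \<longrightarrow> s y = s y')"

lemma changes_only_at_const_on_slice:
  assumes "changes_only_at G s" "slice a H h \<inter> G = {}" "y \<in> slice a H h" "y' \<in> slice a H h"
  shows "s y = s y'"
proof -
  have "s y = s y'" if "y \<le> y'" "y \<in> slice a H h" "y' \<in> slice a H h" for y y'
  proof -
    have "{y..y'} \<inter> G = {}" using slice_interval[OF that(2,3)] assms(2) by fastforce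
    then show ?thesis using assms(1) that(1) unfolding changes_only_at_def by blast
  qed
  then show ?thesis using assms(3,4) by (metis linear)
qed

lemma card_slices_meeting_le:
  assumes "increasing_cuts a H" "finite G"
  shows "card {h. h < H \<and> slice a H h \<inter> G \<noteq> {}} \<le> 2 * card G"
proof -
  have "card {h. h < H \<and> slice a H h \<inter> G \<noteq> {}} \<le> card (\<Union>g\<in>G. {h. h < H \<and> g \<in> slice a H h})"
    by (intro card_mono) (auto simp: assms(2))
  also have "\<dots> \<le> (\<Sum>g\<in>G. card {h. h < H \<and> g \<in> slice a H h})"
    using assms(2) by (rule card_UN_le)
  also have "\<dots> \<le> 2 * card G"
    using sum_bounded_above[of G "\<lambda>g. card {h. h < H \<and> g \<in> slice a H h}" "2::nat"]
      card_slices_containing_le_2[OF assms(1)]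
    by (simp add: mult.commute)
  finally show ?thesis .
qed

definition grid :: "nat \<Rightarrow> nat \<Rightarrow> real set" where
  "grid R n = (\<lambda>k. of_int k / real n) ` {-(int R * int n) .. int R * int n}"

definition grid_step :: "(real \<Rightarrow> 'b::zero) \<Rightarrow> nat \<Rightarrow> nat \<Rightarrow> real \<Rightarrow> 'b" where
  "grid_step m R n y = (if \<bar>y\<bar> \<le> real R then m (of_int \<lfloor>y * real n\<rfloor> / real n) else 0)"

lemma finite_grid: "finite (grid R n)"
  unfolding grid_def by simp

lemma grid_memI:
  assumes "n > 0" "\<bar>k\<bar> \<le> int R * int n"
  shows "of_int k / real n \<in> grid R n"
  unfolding grid_def using assms(2) by (intro imageI) (simp add: abs_le_iff)

lemma grid_bounds_mem: "n > 0 \<Longrightarrow> real R \<in> grid R n" "n > 0 \<Longrightarrow> - real R \<in> grid R n"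
  using grid_memI[of n "int R * int n" R] grid_memI[of n "- (int R * int n)" R] by simp_all

lemma floor_grid_point:
  assumes n: "n > 0" and y: "\<bar>y\<bar> \<le> real R"
  shows "\<bar>of_int \<lfloor>y * real n\<rfloor> / real n\<bar> \<le> real R"
    and "\<bar>y - of_int \<lfloor>y * real n\<rfloor> / real n\<bar> < 1 / real n"
proof -
  let ?k = "\<lfloor>y * real n\<rfloor>"
  have N: "real n > 0" using n by simp
  have "of_int (- (int R * int n)) \<le> y * real n"
    using mult_right_mono[of "- real R" y "real n"] y N by simp
  then have "- (int R * int n) \<le> ?k" by (simp only: le_floor_iff)
  then have "real_of_int (- (int R * int n)) \<le> of_int ?k" by (simp only: of_int_le_iff)
  then have "- (real R * real n) \<le> of_int ?k" by simp
  then have "- real R \<le> of_int ?k / real n" using N by (simp add: le_divide_eq)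
  moreover have "of_int ?k / real n \<le> y" using N by (simp add: divide_le_eq)
  ultimately show "\<bar>of_int ?k / real n\<bar> \<le> real R" using y by linarith
  have "y - of_int ?k / real n = (y * real n - of_int ?k) / real n" using N by (simp add: field_simps)
  moreover have "0 \<le> y * real n - of_int ?k" "y * real n - of_int ?k < 1" by linarith+
  ultimately show "\<bar>y - of_int ?k / real n\<bar> < 1 / real n" using N by (simp add: divide_strict_right_mono)
qed

lemma grid_step_changes_only_at:
  assumes n: "n > 0"
  shows "changes_only_at (grid R n) (grid_step m R n)"
  unfolding changes_only_at_def
proof (intro allI impI)
  fix y1 y2 :: real
  assume le: "y1 \<le> y2" and no_grid: "{y1..y2} \<inter> grid R n = {}"
  have N: "real n > 0" using n by simp
  have no_bound: "\<not> (y1 \<le> - real R \<and> - real R \<le> y2)" "\<not> (y1 \<le> real R \<and> real R \<le> y2)"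
    using no_grid grid_bounds_mem[OF n] by auto
  show "grid_step m R n y1 = grid_step m R n y2"
  proof (cases "y2 < - real R \<or> real R < y1")
    case True
    then show ?thesis using le by (auto simp: grid_step_def abs_le_iff)
  next
    case False
    then have y: "\<bar>y1\<bar> \<le> real R" "\<bar>y2\<bar> \<le> real R"
      using no_bound le unfolding abs_le_iff by linarith+
    let ?k = "\<lfloor>y2 * real n\<rfloor>"
    have "\<lfloor>y1 * real n\<rfloor> = ?k"
    proof (rule ccontr)
      assume "\<lfloor>y1 * real n\<rfloor> \<noteq> ?k"
      moreover have "\<lfloor>y1 * real n\<rfloor> \<le> ?k" using le N by (intro floor_mono mult_right_mono) auto
      ultimately have "y1 * real n < of_int ?k" by linarith
      then have "y1 \<le> of_int ?k / real n" using N by (simp add: le_divide_eq)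
      moreover have "of_int ?k / real n \<le> y2" using N by (simp add: divide_le_eq)
      moreover have "\<bar>real_of_int ?k\<bar> \<le> real R * real n"
        using floor_grid_point(1)[OF n y(2)] N by (simp add: abs_divide divide_le_eq)
      then have "real_of_int \<bar>?k\<bar> \<le> real_of_int (int R * int n)" by simp
      then have "of_int ?k / real n \<in> grid R n" by (intro grid_memI[OF n]) (simp only: of_int_le_iff)
      ultimately show False using no_grid by auto
    qed
    then show ?thesis using y unfolding grid_step_def by simp
  qed
qed

lemma norm_grid_step_le:
  assumes "n > 0" "\<And>y. \<bar>y\<bar> \<le> real R \<Longrightarrow> norm (m y) \<le> B" "0 \<le> B"
  shows "norm (grid_step m R n y) \<le> B"
proof (cases "\<bar>y\<bar> \<le> real R")
  case True
  then show ?thesis using assms(2)[OF floor_grid_point(1)[OF assms(1) True]] by (simp add: grid_step_def)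
qed (simp add: grid_step_def assms(3))

lemma grid_step_approx:
  fixes m :: "real \<Rightarrow> 'b::real_normed_vector"
  assumes "continuous_on UNIV m" "e > 0"
  obtains n where "n > 0" "\<And>y. \<bar>y\<bar> \<le> real R \<Longrightarrow> norm (m y - grid_step m R n y) < e"
proof -
  have uc: "uniformly_continuous_on {-real R..real R} m"
    by (rule compact_uniformly_continuous[OF continuous_on_subset[OF assms(1)]]) simp_all
  obtain d where d: "d > 0"
    "\<And>x x'. x \<in> {-real R..real R} \<Longrightarrow> x' \<in> {-real R..real R} \<Longrightarrow> dist x' x < d \<Longrightarrow> dist (m x') (m x) < e"
    using uniformly_continuous_onE[OF uc assms(2)] by blast
  obtain n :: nat where n: "n > 0" "inverse (real n) < d"
    using ex_inverse_of_nat_less[OF d(1)] by auto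
  show ?thesis
  proof (rule that[OF n(1)])
    fix y assume y: "\<bar>y\<bar> \<le> real R"
    let ?p = "of_int \<lfloor>y * real n\<rfloor> / real n"
    have "dist y ?p < d"
      using floor_grid_point(2)[OF n(1) y] n(2) by (simp add: dist_real_def inverse_eq_divide)
    moreover have "y \<in> {-real R..real R}" "?p \<in> {-real R..real R}"
      using y floor_grid_point(1)[OF n(1) y] unfolding atLeastAtMost_iff abs_le_iff by linarith+
    ultimately have "dist (m y) (m ?p) < e"
      using d(2)[of ?p y] by (simp add: dist_commute)
    then show "norm (m y - grid_step m R n y) < e"
      using y unfolding grid_step_def dist_norm by simp
  qed
qed

section \<open>Approximation of a square-integrable curve on slices\<close>

locale square_integrable_curve = prob_space M for M :: "'a measure" +
  fixes Y :: "'a \<Rightarrow> real" and m :: "real \<Rightarrow> 'b::euclidean_space"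
  assumes Y_measurable[measurable]: "Y \<in> borel_measurable M"
    and continuous_m: "continuous_on UNIV m"
    and integrable_norm_m_sq: "integrable M (\<lambda>w. (norm (m (Y w)))\<^sup>2)"
begin

lemma m_measurable[measurable]: "m \<in> borel_measurable borel"
  using continuous_m by (rule borel_measurable_continuous_onI)

sublocale square_integrable_rv M "\<lambda>w. m (Y w)"
  by unfold_locales (simp_all add: integrable_norm_m_sq)

lemma slice_event_sets: "Y -` slice a H h \<inter> space M \<in> sets M"
  by measurable

lemma sum_slice_integrals_le:
  fixes \<psi> :: "'a \<Rightarrow> real"
  assumes cuts: "increasing_cuts a H" and \<psi>: "integrable M \<psi>" "\<And>w. w \<in> space M \<Longrightarrow> 0 \<le> \<psi> w"
  shows "(\<Sum>h<H. LINT w|M. indicator (Y -` slice a H h \<inter> space M) w * \<psi> w) \<le> 2 * (LINT w|M. \<psi> w)"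
proof -
  let ?S = "\<lambda>h. Y -` slice a H h \<inter> space M"
  have integrable_slice: "integrable M (\<lambda>w. indicator (?S h) w * \<psi> w)" for h
    using integrable_real_mult_indicator[OF slice_event_sets \<psi>(1)] by (simp add: mult.commute)
  have "(\<Sum>h<H. LINT w|M. indicator (?S h) w * \<psi> w) = (LINT w|M. (\<Sum>h<H. indicator (?S h) w * \<psi> w))"
    by (rule Bochner_Integration.integral_sum[symmetric]) (rule integrable_slice)
  also have "\<dots> = (LINT w|M. (\<Sum>h<H. indicator (?S h) w) * \<psi> w)"
    by (simp only: sum_distrib_right)
  also have "\<dots> \<le> (LINT w|M. 2 * \<psi> w)"
  proof (rule integral_mono)
    show "integrable M (\<lambda>w. (\<Sum>h<H. indicator (?S h) w) * \<psi> w)"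
      unfolding sum_distrib_right by (intro Bochner_Integration.integrable_sum integrable_slice)
    show "integrable M (\<lambda>w. 2 * \<psi> w)" using \<psi>(1) by simp
    fix w assume w: "w \<in> space M"
    have "(\<Sum>h<H. indicator (?S h) w :: real) = real (card {h. h < H \<and> Y w \<in> slice a H h})"
      using w by (simp add: indicator_def sum.If_cases Int_def)
    then show "(\<Sum>h<H. indicator (?S h) w) * \<psi> w \<le> 2 * \<psi> w"
      using card_slices_containing_le_2[OF cuts, of "Y w"] \<psi>(2)[OF w] by (intro mult_right_mono) auto
  qed
  finally show ?thesis by simp
qed

lemma tail_norm_m_sq_small:
  assumes "\<delta> > 0"
  obtains R :: nat where "(LINT w|M. indicator {w\<in>space M. real R < \<bar>Y w\<bar>} w * (norm (m (Y w)))\<^sup>2) < \<delta>"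
proof -
  let ?T = "\<lambda>R::nat. \<lambda>w. indicator {w\<in>space M. real R < \<bar>Y w\<bar>} w * (norm (m (Y w)))\<^sup>2"
  have "(\<lambda>R. integral\<^sup>L M (?T R)) \<longlonglongrightarrow> integral\<^sup>L M (\<lambda>w. 0::real)"
  proof (rule integral_dominated_convergence[where w="\<lambda>w. (norm (m (Y w)))\<^sup>2"])
    show "AE w in M. (\<lambda>R. ?T R w) \<longlonglongrightarrow> 0"
    proof (intro AE_I2)
      fix w
      obtain N :: nat where "\<bar>Y w\<bar> \<le> real N" using real_arch_simple by blast
      then have "\<forall>R\<ge>N. ?T R w = 0" by (auto split: split_indicator)
      then show "(\<lambda>R. ?T R w) \<longlonglongrightarrow> 0"
        by (intro tendsto_eventually) (auto simp: eventually_sequentially)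
    qed
  qed (auto simp: integrable_norm_m_sq split: split_indicator)
  then have "eventually (\<lambda>R. integral\<^sup>L M (?T R) < \<delta>) sequentially"
    using assms by (intro order_tendstoD(2)) auto
  then show ?thesis using that by (auto simp: eventually_sequentially)
qed

lemma integrable_norm_m_diff_sq:
  assumes "s \<in> borel_measurable borel" "\<And>y. norm (s y) \<le> B"
  shows "integrable M (\<lambda>w. (norm (m (Y w) - s (Y w)))\<^sup>2)"
proof (rule Bochner_Integration.integrable_bound[where f="\<lambda>w. 2 * (norm (m (Y w)))\<^sup>2 + 2 * B\<^sup>2"])
  have "(norm (m (Y w) - s (Y w)))\<^sup>2 \<le> 2 * (norm (m (Y w)))\<^sup>2 + 2 * B\<^sup>2" for w
    using norm_diff_sq_le[of "m (Y w)" "s (Y w)"] power_mono[OF assms(2)[of "Y w"] norm_ge_zero, of 2]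
    by linarith
  then show "AE w in M. norm ((norm (m (Y w) - s (Y w)))\<^sup>2) \<le> norm (2 * (norm (m (Y w)))\<^sup>2 + 2 * B\<^sup>2)"
    by (intro AE_I2) simp
qed (use assms(1) integrable_norm_m_sq in auto)

lemma step_approximation:
  assumes "\<delta> > 0"
  obtains G s B where "finite G" "changes_only_at G s" "s \<in> borel_measurable borel"
    "\<And>y. norm (s y) \<le> B" "(LINT w|M. (norm (m (Y w) - s (Y w)))\<^sup>2) \<le> \<delta>"
proof -
  obtain R where R: "(LINT w|M. indicator {w\<in>space M. real R < \<bar>Y w\<bar>} w * (norm (m (Y w)))\<^sup>2) < \<delta> / 2"
    using tail_norm_m_sq_small[of "\<delta> / 2"] assms by auto
  obtain n where n: "n > 0" "\<And>y. \<bar>y\<bar> \<le> real R \<Longrightarrow> norm (m y - grid_step m R n y) < sqrt (\<delta> / 2)"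
    using grid_step_approx[OF continuous_m, of "sqrt (\<delta> / 2)" R] assms by auto
  have "compact (m ` {-real R..real R})"
    by (rule compact_continuous_image[OF continuous_on_subset[OF continuous_m]]) auto
  then have "bounded (m ` {-real R..real R})" by (rule compact_imp_bounded)
  then obtain B where B: "B > 0" "\<And>x. x \<in> m ` {-real R..real R} \<Longrightarrow> norm x \<le> B"
    unfolding bounded_pos by blast
  define s where "s = grid_step m R n"
  have s_bounded: "norm (s y) \<le> B" for y
    unfolding s_def using B by (intro norm_grid_step_le n(1)) (simp_all add: abs_le_iff)
  have s_measurable[measurable]: "s \<in> borel_measurable borel"
    unfolding s_def grid_step_def by measurable
  let ?\<psi> = "\<lambda>w. (norm (m (Y w) - s (Y w)))\<^sup>2"
  let ?T = "\<lambda>w. indicator {w\<in>space M. real R < \<bar>Y w\<bar>} w * (norm (m (Y w)))\<^sup>2"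
  have integrable_T: "integrable M ?T"
    using integrable_real_mult_indicator[OF _ integrable_norm_m_sq, of "{w\<in>space M. real R < \<bar>Y w\<bar>}"]
    by (simp add: mult.commute)
  have "(LINT w|M. ?\<psi> w) \<le> (LINT w|M. \<delta> / 2 + ?T w)"
  proof (rule integral_mono)
    show "integrable M ?\<psi>"
      by (rule integrable_norm_m_diff_sq[OF s_measurable s_bounded])
    fix w assume w: "w \<in> space M"
    show "?\<psi> w \<le> \<delta> / 2 + ?T w"
    proof (cases "\<bar>Y w\<bar> \<le> real R")
      case True
      have "?\<psi> w \<le> (sqrt (\<delta> / 2))\<^sup>2"
        using n(2)[OF True] unfolding s_def by (intro power_mono) auto
      then show ?thesis using assms True by (simp add: indicator_def)
    qed (use w assms in \<open>simp add: s_def grid_step_def\<close>)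
  qed (use integrable_T in simp)
  also have "\<dots> < \<delta>" using R integrable_T by (simp add: prob_space)
  finally show ?thesis
    using that[OF finite_grid grid_step_changes_only_at[OF n(1), of R m, folded s_def] s_measurable s_bounded]
    by simp
qed

lemma sq_dev_on_event_le:
  assumes S: "S \<in> sets M" and s: "s \<in> borel_measurable borel" "\<And>y. norm (s y) \<le> B"
    and close: "\<And>w. w \<in> S \<Longrightarrow> norm (s (Y w) - c) \<le> b"
  shows "(LINT w|M. indicator S w * (norm (m (Y w) - c))\<^sup>2)
    \<le> 2 * (LINT w|M. indicator S w * (norm (m (Y w) - s (Y w)))\<^sup>2) + 2 * b\<^sup>2 * measure M S"
proof -
  let ?\<psi> = "\<lambda>w. (norm (m (Y w) - s (Y w)))\<^sup>2"
  have integrable_S: "integrable M (\<lambda>w. indicator S w * f w)" if "integrable M f" for f :: "'a \<Rightarrow> real"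
    using integrable_real_mult_indicator[OF S that] by (simp add: mult.commute)
  have "indicator S w * (norm (m (Y w) - c))\<^sup>2 \<le> 2 * (indicator S w * ?\<psi> w) + 2 * b\<^sup>2 * indicator S w" for w
  proof (cases "w \<in> S")
    case True
    have "(norm (m (Y w) - c))\<^sup>2 \<le> 2 * ?\<psi> w + 2 * (norm (s (Y w) - c))\<^sup>2"
      using norm_diff_sq_le[of "m (Y w) - s (Y w)" "c - s (Y w)"] by (simp add: norm_minus_commute)
    also have "(norm (s (Y w) - c))\<^sup>2 \<le> b\<^sup>2"
      using close[OF True] by (intro power_mono) auto
    finally show ?thesis using True by simp
  qed simp
  then have "(LINT w|M. indicator S w * (norm (m (Y w) - c))\<^sup>2)
      \<le> (LINT w|M. 2 * (indicator S w * ?\<psi> w) + 2 * b\<^sup>2 * indicator S w)"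
    using integrable_S[OF integrable_norm_diff_sq] integrable_S[OF integrable_norm_m_diff_sq[OF s]] S
    by (intro integral_mono) (auto simp: emeasure_eq_measure)
  also have "\<dots> = 2 * (LINT w|M. indicator S w * ?\<psi> w) + 2 * b\<^sup>2 * measure M S"
    using integrable_S[OF integrable_norm_m_diff_sq[OF s]] S by (simp add: emeasure_eq_measure)
  finally show ?thesis .
qed

lemma sliced_sq_dev_le_step:
  assumes cuts: "increasing_cuts a H" and G: "finite G" "changes_only_at G s"
    and s: "s \<in> borel_measurable borel" "\<And>y. norm (s y) \<le> B"
    and q: "0 \<le> q" "\<And>h. h < H \<Longrightarrow> measure M (Y -` slice a H h \<inter> space M) \<le> q"
  obtains c where "(\<Sum>h<H. LINT w|M. indicator (Y -` slice a H h \<inter> space M) w * (norm (m (Y w) - c h))\<^sup>2)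
    \<le> 4 * (LINT w|M. (norm (m (Y w) - s (Y w)))\<^sup>2) + 4 * real (card G) * B\<^sup>2 * q"
proof -
  let ?S = "\<lambda>h. Y -` slice a H h \<inter> space M"
  let ?\<psi> = "\<lambda>w. (norm (m (Y w) - s (Y w)))\<^sup>2"
  define bad where "bad = {h. h < H \<and> slice a H h \<inter> G \<noteq> {}}"
  \<comment> \<open>On a slice without jump point \<open>s\<close> is constant and \<open>c h\<close> is its value; the at most
    \<open>2 * card G\<close> other slices get \<open>c h = 0\<close> and cost at most \<open>B\<^sup>2\<close> times their probability.\<close>
  define c where "c h = (if h \<in> bad then 0 else s (SOME y. y \<in> slice a H h))" for h
  have s_eq_c: "s y = c h" if "h < H" "h \<notin> bad" "y \<in> slice a H h" for h y
    using changes_only_at_const_on_slice[OF G(2) _ that(3) someI[of "\<lambda>y. y \<in> slice a H h", OF that(3)]] that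
    unfolding bad_def c_def by auto
  have integrable_\<psi>: "integrable M ?\<psi>"
    by (rule integrable_norm_m_diff_sq[OF s])
  have per_slice: "(LINT w|M. indicator (?S h) w * (norm (m (Y w) - c h))\<^sup>2)
      \<le> 2 * (LINT w|M. indicator (?S h) w * ?\<psi> w) + (if h \<in> bad then 2 * B\<^sup>2 * q else 0)"
    if "h < H" for h
  proof -
    have "norm (s (Y w) - c h) \<le> (if h \<in> bad then B else 0)" if "w \<in> ?S h" for w
      using s_eq_c[OF \<open>h < H\<close>, of "Y w"] s(2)[of "Y w"] that by (auto simp: c_def)
    then have "(LINT w|M. indicator (?S h) w * (norm (m (Y w) - c h))\<^sup>2)
        \<le> 2 * (LINT w|M. indicator (?S h) w * ?\<psi> w) + 2 * (if h \<in> bad then B else 0)\<^sup>2 * measure M (?S h)"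
      by (intro sq_dev_on_event_le[OF slice_event_sets s])
    also have "\<dots> \<le> 2 * (LINT w|M. indicator (?S h) w * ?\<psi> w) + (if h \<in> bad then 2 * B\<^sup>2 * q else 0)"
      using q(2)[OF that] by (simp add: mult_left_mono)
    finally show ?thesis .
  qed
  have "(\<Sum>h<H. LINT w|M. indicator (?S h) w * (norm (m (Y w) - c h))\<^sup>2)
      \<le> (\<Sum>h<H. 2 * (LINT w|M. indicator (?S h) w * ?\<psi> w) + (if h \<in> bad then 2 * B\<^sup>2 * q else 0))"
    by (intro sum_mono per_slice) simp
  also have "\<dots> = 2 * (\<Sum>h<H. LINT w|M. indicator (?S h) w * ?\<psi> w) + (\<Sum>h<H. if h \<in> bad then 2 * B\<^sup>2 * q else 0)"
    by (simp add: sum.distrib sum_distrib_left)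
  also have "(\<Sum>h<H. if h \<in> bad then 2 * B\<^sup>2 * q else 0) = real (card bad) * (2 * B\<^sup>2 * q)"
    by (simp add: sum.If_cases bad_def Int_def conj_commute)
  also have "\<dots> \<le> real (2 * card G) * (2 * B\<^sup>2 * q)"
    using card_slices_meeting_le[OF cuts G(1)] q(1) unfolding bad_def by (intro mult_right_mono) simp_all
  also have "2 * (\<Sum>h<H. LINT w|M. indicator (?S h) w * ?\<psi> w) \<le> 2 * (2 * (LINT w|M. ?\<psi> w))"
    using sum_slice_integrals_le[OF cuts integrable_\<psi>] by simp
  finally show ?thesis using that[of c] by simp
qed

lemma sliced_sq_dev_small:
  assumes "\<epsilon> > 0"
  obtains K :: nat where "K > 0"
    "\<And>H a. K \<le> H \<Longrightarrow> increasing_cuts a H \<Longrightarrow>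
       (\<And>h. h < H \<Longrightarrow> measure M (Y -` slice a H h \<inter> space M) \<le> 2 / real H) \<Longrightarrow>
       \<exists>c. (\<Sum>h<H. LINT w|M. indicator (Y -` slice a H h \<inter> space M) w * (norm (m (Y w) - c h))\<^sup>2) \<le> \<epsilon>"
proof -
  obtain G s B where G: "finite G" "changes_only_at G s" and s: "s \<in> borel_measurable borel" "\<And>y. norm (s y) \<le> B"
    and approx: "(LINT w|M. (norm (m (Y w) - s (Y w)))\<^sup>2) \<le> \<epsilon> / 8"
    using step_approximation[of "\<epsilon> / 8"] assms by auto
  define K where "K = nat \<lceil>16 * real (card G) * B\<^sup>2 / \<epsilon>\<rceil> + 1"
  show ?thesis
  proof (rule that)
    show "K > 0" unfolding K_def by simp
    fix H :: nat and a
    assume H: "K \<le> H" and cuts: "increasing_cuts a H"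
      and small: "\<And>h. h < H \<Longrightarrow> measure M (Y -` slice a H h \<inter> space M) \<le> 2 / real H"
    have "16 * real (card G) * B\<^sup>2 / \<epsilon> \<le> real H"
      using H unfolding K_def by linarith
    then have "4 * real (card G) * B\<^sup>2 * (2 / real H) \<le> \<epsilon> / 2"
      using assms H unfolding K_def by (simp add: field_simps)
    moreover obtain c where "(\<Sum>h<H. LINT w|M. indicator (Y -` slice a H h \<inter> space M) w * (norm (m (Y w) - c h))\<^sup>2)
        \<le> 4 * (LINT w|M. (norm (m (Y w) - s (Y w)))\<^sup>2) + 4 * real (card G) * B\<^sup>2 * (2 / real H)"
      by (rule sliced_sq_dev_le_step[OF cuts G s _ small]) simp
    ultimately show "\<exists>c. (\<Sum>h<H. LINT w|M. indicator (Y -` slice a H h \<inter> space M) w * (norm (m (Y w) - c h))\<^sup>2) \<le> \<epsilon>"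
      using approx by (intro exI[of _ c]) linarith
  qed
qed

end

section \<open>Square integrability of the central curve\<close>

lemma vec_nth_borel_measurable[measurable]: "(\<lambda>x::real^'n. x $ i) \<in> borel_measurable borel"
  by (intro borel_measurable_continuous_onI linear_continuous_on bounded_linear_vec_nth)

lemma sq_le_one_plus_abs_powr:
  assumes "2 \<le> ell"
  shows "t\<^sup>2 \<le> 1 + \<bar>t::real\<bar> powr ell"
proof (cases "\<bar>t\<bar> \<le> 1")
  case True
  then have "t\<^sup>2 \<le> 1" by (simp add: abs_square_le_1)
  then show ?thesis by (simp add: add_increasing2)
next
  case False
  then have "t\<^sup>2 = \<bar>t\<bar> powr 2" by (simp add: powr_numeral)
  also have "\<dots> \<le> \<bar>t\<bar> powr ell" using False assms by (intro powr_mono) auto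
  finally show ?thesis by simp
qed

lemma (in finite_measure) integrable_sq_of_moment:
  fixes f :: "'a \<Rightarrow> real"
  assumes [measurable]: "f \<in> borel_measurable M" and "2 \<le> ell"
    and "(\<integral>\<^sup>+ w. ennreal (\<bar>f w\<bar> powr ell) \<partial>M) < \<infinity>"
  shows "integrable M (\<lambda>w. (f w)\<^sup>2)"
proof (rule Bochner_Integration.integrable_bound[where f="\<lambda>w. 1 + \<bar>f w\<bar> powr ell"])
  have "integrable M (\<lambda>w. \<bar>f w\<bar> powr ell)"
    using assms(3) by (intro integrableI_bounded) simp_all
  then show "integrable M (\<lambda>w. 1 + \<bar>f w\<bar> powr ell)" by simp
  show "AE w in M. norm ((f w)\<^sup>2) \<le> norm (1 + \<bar>f w\<bar> powr ell)"
    using sq_le_one_plus_abs_powr[OF assms(2)] by (intro AE_I2) simp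
qed simp

lemma (in sigma_finite_subalgebra) integrable_cond_exp_sq:
  assumes "integrable M f" "integrable M (\<lambda>w. (f w)\<^sup>2)"
  shows "integrable M (\<lambda>w. (real_cond_exp M F f w)\<^sup>2)"
  by (rule integrable_convex_cond_exp[where I=UNIV and q="\<lambda>x. x\<^sup>2"]) (use assms convex_power2 in auto)

lemma integrable_norm_cond_mean_sq:
  fixes X :: "'a \<Rightarrow> real ^ 'p" and m :: "real \<Rightarrow> real ^ 'p"
  assumes "prob_space M" and [measurable]: "X \<in> borel_measurable M" "Y \<in> borel_measurable M"
    "m \<in> borel_measurable borel" and "2 \<le> ell"
    and moment: "\<forall>\<beta>::real ^ 'p. norm \<beta> = 1 \<longrightarrow> (\<integral>\<^sup>+ w. ennreal (\<bar>\<beta> \<bullet> X w\<bar> powr ell) \<partial>M) \<le> ennreal c"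
    and cond_mean: "\<forall>i. AE w in M. real_cond_exp M (vimage_algebra (space M) Y borel) (\<lambda>v. X v $ i) w = m (Y w) $ i"
  shows "integrable M (\<lambda>w. (norm (m (Y w)))\<^sup>2)"
proof -
  interpret prob_space M by fact
  have "subalgebra M (vimage_algebra (space M) Y borel)"
    unfolding subalgebra_def using measurable_iff_sets[of Y M borel] by simp
  then interpret finite_measure_subalgebra M "vimage_algebra (space M) Y borel"
    by unfold_locales
  have "integrable M (\<lambda>w. (m (Y w) $ i)\<^sup>2)" for i
  proof -
    have "(\<integral>\<^sup>+ w. ennreal (\<bar>axis i 1 \<bullet> X w\<bar> powr ell) \<partial>M) \<le> ennreal c"
      using moment norm_axis_1 by blast
    moreover have "axis i 1 \<bullet> X w = X w $ i" for w by (simp add: inner_axis')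
    ultimately have moment_i: "(\<integral>\<^sup>+ w. ennreal (\<bar>X w $ i\<bar> powr ell) \<partial>M) < \<infinity>"
      using ennreal_less_top[of c] by (simp add: le_less_trans)
    have Xi: "(\<lambda>w. X w $ i) \<in> borel_measurable M"
      using measurable_compose[OF assms(2) vec_nth_borel_measurable] .
    have Xi_sq: "integrable M (\<lambda>w. (X w $ i)\<^sup>2)"
      by (rule integrable_sq_of_moment[OF Xi assms(5) moment_i])
    have cond_exp_sq: "integrable M (\<lambda>w. (real_cond_exp M (vimage_algebra (space M) Y borel) (\<lambda>v. X v $ i) w)\<^sup>2)"
      by (rule integrable_cond_exp_sq[OF square_integrable_imp_integrable[OF Xi Xi_sq] Xi_sq])
    have "(\<lambda>w. (m (Y w) $ i)\<^sup>2) \<in> borel_measurable M" by measurable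
    moreover have "AE w in M. (real_cond_exp M (vimage_algebra (space M) Y borel) (\<lambda>v. X v $ i) w)\<^sup>2
        = (m (Y w) $ i)\<^sup>2"
      using cond_mean[rule_format, of i] by eventually_elim simp
    ultimately show ?thesis
      by (rule integrable_cong_AE_imp[OF cond_exp_sq])
  qed
  then have "integrable M (\<lambda>w. \<Sum>i\<in>UNIV. (m (Y w) $ i)\<^sup>2)"
    by (rule Bochner_Integration.integrable_sum)
  then show ?thesis
    unfolding power2_norm_eq_inner inner_vec_def by (simp add: power2_eq_square)
qed

section \<open>Sliced stability\<close>

lemma weak_sliced_stable_mono:
  assumes "weak_sliced_stable \<gamma> M Y \<kappa> K \<tau>" "K \<le> K'"
  shows "weak_sliced_stable \<gamma> M Y \<kappa> K' \<tau>"
  using assms unfolding weak_sliced_stable_def by auto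

lemma weak_sliced_stable_exists:
  fixes m :: "real \<Rightarrow> real ^ 'p"
  assumes "square_integrable_curve M Y m" and \<gamma>: "0 < \<gamma>" "\<gamma> < 1" and \<tau>: "1 < \<tau>"
  obtains K where "weak_sliced_stable \<gamma> M Y m K \<tau>"
proof -
  interpret square_integrable_curve M Y m by fact
  obtain l where l: "l > 0"
    "\<And>u. \<forall>x\<in>null_directions. u \<bullet> x = 0 \<Longrightarrow> l * (norm u)\<^sup>2 \<le> var_rv M (\<lambda>w. u \<bullet> m (Y w))"
    using var_rv_inner_coercive by blast
  define \<epsilon> where "\<epsilon> = l * (1 - \<gamma>) / \<tau>"
  obtain K where K: "K > 0" and sliced: "\<And>H a. K \<le> H \<Longrightarrow> increasing_cuts a H \<Longrightarrow>
       (\<And>h. h < H \<Longrightarrow> measure M (Y -` slice a H h \<inter> space M) \<le> 2 / real H) \<Longrightarrow>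
       \<exists>c. (\<Sum>h<H. LINT w|M. indicator (Y -` slice a H h \<inter> space M) w * (norm (m (Y w) - c h))\<^sup>2) \<le> \<epsilon>"
    using sliced_sq_dev_small[of \<epsilon>] l \<gamma> \<tau> unfolding \<epsilon>_def by auto
  have "weak_sliced_stable \<gamma> M Y m K \<tau>"
    unfolding weak_sliced_stable_def increasing_cuts_def[symmetric]
  proof (intro conjI allI impI continuous_m K \<tau>)
    fix H a and \<beta> :: "real ^ 'p"
    assume H: "K \<le> H" and cuts: "increasing_cuts a H" and "norm \<beta> = 1"
      and prob: "\<forall>h<H. (1 - \<gamma>) / real H \<le> measure M (Y -` slice a H h \<inter> space M) \<and>
                measure M (Y -` slice a H h \<inter> space M) \<le> (1 + \<gamma>) / real H"
    let ?S = "\<lambda>h. Y -` slice a H h \<inter> space M"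
    have H_pos: "real H > 0" using H K by simp
    have "(1 + \<gamma>) / real H \<le> 2 / real H" using \<gamma> H_pos by (intro divide_right_mono) auto
    then obtain c where c: "(\<Sum>h<H. LINT w|M. indicator (?S h) w * (norm (m (Y w) - c h))\<^sup>2) \<le> \<epsilon>"
      using sliced[OF H cuts] prob by force
    obtain u where null: "\<beta> - u \<in> null_directions" and u_perp: "\<forall>x\<in>null_directions. u \<bullet> x = 0"
      by (rule null_directions_decomp)
    have "(\<Sum>h<H. cond_var M (?S h) (\<lambda>w. \<beta> \<bullet> m (Y w)))
        \<le> (norm u)\<^sup>2 / ((1 - \<gamma>) / real H)
          * (\<Sum>h<H. LINT w|M. indicator (?S h) w * (norm (m (Y w) - c h))\<^sup>2)"
      using prob \<gamma> H_pos by (intro sum_cond_var_inner_le[OF slice_event_sets _ _ null]) auto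
    also have "\<dots> \<le> (norm u)\<^sup>2 / ((1 - \<gamma>) / real H) * \<epsilon>"
      using c \<gamma> H_pos by (intro mult_left_mono) auto
    finally have "(1 / real H) * (\<Sum>h<H. cond_var M (?S h) (\<lambda>w. \<beta> \<bullet> m (Y w)))
        \<le> (1 / real H) * ((norm u)\<^sup>2 / ((1 - \<gamma>) / real H) * \<epsilon>)"
      using H_pos by (intro mult_left_mono) auto
    also have "\<dots> = (1 / \<tau>) * (l * (norm u)\<^sup>2)"
      using \<gamma> \<tau> H_pos unfolding \<epsilon>_def by (simp add: field_simps)
    also have "\<dots> \<le> (1 / \<tau>) * var_rv M (\<lambda>w. \<beta> \<bullet> m (Y w))"
      using l(2)[OF u_perp] var_rv_inner_null_shift[OF null] \<tau> by (intro mult_left_mono) auto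
    finally show "(1 / real H) * (\<Sum>h<H. cond_var M (?S h) (\<lambda>w. \<beta> \<bullet> m (Y w)))
        \<le> (1 / \<tau>) * var_rv M (\<lambda>w. \<beta> \<bullet> m (Y w))" .
  qed
  then show ?thesis by (rule that)
qed

theorem mainTheorem2:
  fixes M :: "'a measure" and X :: "'a \<Rightarrow> real ^ 'p" and Y :: "'a \<Rightarrow> real"
    and m :: "real \<Rightarrow> real ^ 'p" and \<gamma> ell c\<^sub>1 \<tau> :: real
  assumes "prob_space M"
    and "0 < \<gamma>" "\<gamma> < 1"
    and "X \<in> borel_measurable M" "Y \<in> borel_measurable M"
    and "ell > 2" "c\<^sub>1 > 0"
    and "\<forall>\<beta>::real ^ 'p. norm \<beta> = 1 \<longrightarrow>
           (\<integral>\<^sup>+ w. ennreal (\<bar>\<beta> \<bullet> X w\<bar> powr ell) \<partial>M) \<le> ennreal c\<^sub>1"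
    and "\<forall>y. measure M (Y -` {y} \<inter> space M) = 0"
    and "\<forall>i. AE w in M. real_cond_exp M (vimage_algebra (space M) Y borel) (\<lambda>v. X v $ i) w
                        = m (Y w) $ i"
    and "continuous_on UNIV m"
    and "\<tau> > 1"
  shows "\<exists>K::nat. K \<ge> dim (span (range m)) \<and> weak_sliced_stable \<gamma> M Y m K \<tau>"
proof -
  have m_measurable: "m \<in> borel_measurable borel"
    using assms(11) by (rule borel_measurable_continuous_onI)
  have "integrable M (\<lambda>w. (norm (m (Y w)))\<^sup>2)"
    using assms(6) by (intro integrable_norm_cond_mean_sq[OF assms(1,4,5) m_measurable _ assms(8,10)]) simp
  then have "square_integrable_curve M Y m"
    using assms(1,5,11) by (simp add: square_integrable_curve_def square_integrable_curve_axioms_def)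
  then obtain K where "weak_sliced_stable \<gamma> M Y m K \<tau>"
    using weak_sliced_stable_exists assms(2,3,12) by blast
  then have "weak_sliced_stable \<gamma> M Y m (max K (dim (span (range m)))) \<tau>"
    by (rule weak_sliced_stable_mono) simp
  then show ?thesis by (intro exI[of _ "max K (dim (span (range m)))"]) simp
qed

end
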